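(* Let $\mathcal{V}$ and $\mathcal{W}$ be quaternionic two-sided Banach algebras with unit $1\neq 0$, let $\mathcal{A}:\mathcal{V}\to\mathcal{W}$ be a bounded below homomorphism, and let $a\in\mathcal{V}$. Then $\partial\sigma_{S}(a)\subset\partial\sigma_{S,\mathcal{A}}^{\Phi}(a)$, where $\partial$ denotes the boundary in $\mathbb{H}$.
   Context: $\mathbb{H}$ denotes the quaternions, $Re(q)$ the real part and $|q|$ the norm of $q$. A quaternionic two-sided Banach algebra with unit is a two-sided $\mathbb{H}$-vector space $\mathcal{V}$ with an associative product satisfying $x(y+z)=xy+xz$, $(x+y)z=xz+yz$, $q(xy)=(qx)y$, $(xy)q=x(yq)$, complete for a norm with $\|qx\|=|q|\|x\|=\|xq\|$, $\|xy\|\le\|x\|\|y\|$, with unit $1_{\mathcal{V}}$, $\|1_{\mathcal{V}}\|=1$. A homomorphism $\mathcal{A}$ is additive, multiplicative, $\mathbb{H}$-linear on both sides and unital; it is bounded below if there is $c>0$ with $\|\mathcal{A}(v)\|\ge c\|v\|$ for all $v$. $\mathcal{V}^{-1}$ denotes invertible elements. $R_q(v)=v^2-2Re(q)v+|q|^21_{\mathcal{V}}$. The S-spectrum is $\sigma_S(v)=\{q\in\mathbb{H}:R_q(v)\notin\mathcal{V}^{-1}\}$. $\Phi_{\mathcal{A}}=\{v:\mathcal{A}(v)\in\mathcal{W}^{-1}\}$ and $\sigma_{S,\mathcal{A}}^{\Phi}(v)=\{q\in\mathbb{H}:R_q(v)\notin\Phi_{\mathcal{A}}\}$. *)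

theory Defs
  imports "HOL-Analysis.Analysis"
begin

text \<open>Quaternions are modelled as real 4-tuples (a,b,c,d) = a + b i + c j + d k,
  carrying the Euclidean norm/topology of the product type (norm = quaternionic modulus).\<close>

type_synonym quat = "real \<times> real \<times> real \<times> real"

definition qmul :: "quat \<Rightarrow> quat \<Rightarrow> quat" where
  "qmul p q = (case p of (a1, b1, c1, d1) \<Rightarrow> case q of (a2, b2, c2, d2) \<Rightarrow>
     (a1*a2 - b1*b2 - c1*c2 - d1*d2,
      a1*b2 + b1*a2 + c1*d2 - d1*c2,
      a1*c2 - b1*d2 + c1*a2 + d1*b2,
      a1*d2 + b1*c2 - c1*b2 + d1*a2))"

definition qof_real :: "real \<Rightarrow> quat" where
  "qof_real r = (r, 0, 0, 0)"

definition qRe :: "quat \<Rightarrow> real" where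
  "qRe q = fst q"

text \<open>A quaternionic two-sided Banach algebra with unit: the underlying type is a real
  Banach algebra with unit (associativity, distributivity, completeness,
  norm (x*y) \<le> norm x * norm y, norm 1 = 1, 1 \<noteq> 0 come from the type class);
  L is the left and R the right quaternionic scalar multiplication.\<close>

definition quat_two_sided_banach_algebra ::
  "(quat \<Rightarrow> 'v::{real_normed_algebra_1,banach} \<Rightarrow> 'v) \<Rightarrow> ('v \<Rightarrow> quat \<Rightarrow> 'v) \<Rightarrow> bool" where
  "quat_two_sided_banach_algebra L R \<longleftrightarrow>
     (\<forall>p q x. L (qmul p q) x = L p (L q x)) \<and>
     (\<forall>p q x. L (p + q) x = L p x + L q x) \<and>
     (\<forall>q x y. L q (x + y) = L q x + L q y) \<and>
     (\<forall>p q x. R x (qmul p q) = R (R x p) q) \<and>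
     (\<forall>p q x. R x (p + q) = R x p + R x q) \<and>
     (\<forall>q x y. R (x + y) q = R x q + R y q) \<and>
     (\<forall>p q x. R (L q x) p = L q (R x p)) \<and>
     (\<forall>r x. L (qof_real r) x = r *\<^sub>R x \<and> R x (qof_real r) = r *\<^sub>R x) \<and>
     (\<forall>q x y. L q (x * y) = L q x * y) \<and>
     (\<forall>q x y. R (x * y) q = x * R y q) \<and>
     (\<forall>q x. norm (L q x) = norm q * norm x) \<and>
     (\<forall>q x. norm (R x q) = norm q * norm x)"

definition quat_alg_hom ::
  "(quat \<Rightarrow> 'v::{real_normed_algebra_1,banach} \<Rightarrow> 'v) \<Rightarrow> ('v \<Rightarrow> quat \<Rightarrow> 'v) \<Rightarrow>
   (quat \<Rightarrow> 'w::{real_normed_algebra_1,banach} \<Rightarrow> 'w) \<Rightarrow> ('w \<Rightarrow> quat \<Rightarrow> 'w) \<Rightarrow>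
   ('v \<Rightarrow> 'w) \<Rightarrow> bool" where
  "quat_alg_hom LV RV LW RW A \<longleftrightarrow>
     (\<forall>x y. A (x + y) = A x + A y) \<and>
     (\<forall>x y. A (x * y) = A x * A y) \<and>
     (\<forall>q x. A (LV q x) = LW q (A x)) \<and>
     (\<forall>q x. A (RV x q) = RW (A x) q) \<and>
     A 1 = 1"

definition bounded_below :: "('v::real_normed_vector \<Rightarrow> 'w::real_normed_vector) \<Rightarrow> bool" where
  "bounded_below A \<longleftrightarrow> (\<exists>c>0. \<forall>v. norm (A v) \<ge> c * norm v)"

definition invertible_elem :: "'a::ring_1 \<Rightarrow> bool" where
  "invertible_elem x \<longleftrightarrow> (\<exists>y. x * y = 1 \<and> y * x = 1)"

definition Rq :: "quat \<Rightarrow> 'v::real_normed_algebra_1 \<Rightarrow> 'v" where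
  "Rq q v = v * v - (2 * qRe q) *\<^sub>R v + (norm q)\<^sup>2 *\<^sub>R 1"

definition S_spectrum :: "'v::real_normed_algebra_1 \<Rightarrow> quat set" where
  "S_spectrum v = {q. \<not> invertible_elem (Rq q v)}"

definition Phi_set :: "('v \<Rightarrow> 'w::ring_1) \<Rightarrow> 'v set" where
  "Phi_set A = {v. invertible_elem (A v)}"

definition S_Phi_spectrum ::
  "('v::real_normed_algebra_1 \<Rightarrow> 'w::ring_1) \<Rightarrow> 'v \<Rightarrow> quat set" where
  "S_Phi_spectrum A v = {q. Rq q v \<notin> Phi_set A}"

end

theory Submission
  imports Defs
begin

text \<open>Since A preserves invertibility, the essential S-spectrum lies inside the S-spectrum, so it
  suffices to show that a boundary point q of the (closed) S-spectrum belongs to the essential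
  one. Otherwise \<open>Rq q (A a)\<close> is invertible; pick p close to q with \<open>Rq p a\<close> invertible. The
  images \<open>Rq p (A a)\<close> are close to \<open>Rq q (A a)\<close>, so their inverses are uniformly bounded;
  as A is bounded below, so are the inverses of \<open>Rq p a\<close>, and a Neumann series then makes
  \<open>Rq q a\<close> invertible.\<close>

lemma invertible_one_minus:
  fixes u :: "'a::{real_normed_algebra_1,banach}"
  assumes "norm u < 1"
  obtains s where "(1 - u) * s = 1" "s * (1 - u) = 1" "norm s \<le> 1 / (1 - norm u)"
proof -
  have sm: "summable (\<lambda>n. u ^ n)" using complete_algebra_summable_geometric[OF assms] .
  define s where "s = (\<Sum>n. u ^ n)"
  have telescope: "(\<lambda>n. u ^ n - u ^ Suc n) sums 1"
    using telescope_sums'[OF summable_LIMSEQ_zero[OF sm]] by simp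
  have "(\<lambda>n. (1 - u) * u ^ n) sums ((1 - u) * s)"
    using sums_mult[OF summable_sums[OF sm]] s_def by simp
  moreover have "(\<lambda>n. (1 - u) * u ^ n) = (\<lambda>n. u ^ n - u ^ Suc n)"
    by (simp add: algebra_simps)
  ultimately have right: "(1 - u) * s = 1" using telescope sums_unique2 by metis
  have "(\<lambda>n. u ^ n * (1 - u)) sums (s * (1 - u))"
    using sums_mult2[OF summable_sums[OF sm]] s_def by simp
  moreover have "(\<lambda>n. u ^ n * (1 - u)) = (\<lambda>n. u ^ n - u ^ Suc n)"
    by (simp add: algebra_simps power_commutes)
  ultimately have left: "s * (1 - u) = 1" using telescope sums_unique2 by metis
  have geom: "summable (\<lambda>n. norm u ^ n)" using assms by (simp add: summable_geometric)
  have norms: "summable (\<lambda>n. norm (u ^ n))"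
    by (rule summable_comparison_test[OF _ geom]) (auto simp: norm_power_ineq)
  have "norm s \<le> (\<Sum>n. norm (u ^ n))" unfolding s_def by (rule summable_norm[OF norms])
  also have "\<dots> \<le> (\<Sum>n. norm u ^ n)"
    by (rule suminf_le[OF _ norms geom]) (simp add: norm_power_ineq)
  also have "\<dots> = 1 / (1 - norm u)" using suminf_geometric[of "norm u"] assms by simp
  finally show ?thesis using that left right by blast
qed

lemma invertible_add_small:
  fixes x :: "'a::{real_normed_algebra_1,banach}"
  assumes inv: "x * y = 1" "y * x = 1" and small: "norm h * norm y < 1"
  obtains z where "(x + h) * z = 1" "z * (x + h) = 1"
    "norm z \<le> norm y / (1 - norm h * norm y)"
proof -
  define u where "u = - (y * h)"
  have u_le: "norm u \<le> norm h * norm y"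
    unfolding u_def using norm_mult_ineq[of y h] by (simp add: mult.commute)
  then obtain s where s: "(1 - u) * s = 1" "s * (1 - u) = 1" "norm s \<le> 1 / (1 - norm u)"
    using invertible_one_minus small by (metis le_less_trans)
  have factor: "x + h = x * (1 - u)"
    unfolding u_def by (simp add: algebra_simps inv flip: mult.assoc)
  have "norm (s * y) \<le> norm s * norm y" by (rule norm_mult_ineq)
  also have "\<dots> \<le> 1 / (1 - norm u) * norm y" by (rule mult_right_mono[OF s(3)]) simp
  also have "\<dots> \<le> 1 / (1 - norm h * norm y) * norm y"
    using u_le small by (intro mult_right_mono divide_left_mono) auto
  finally have "norm (s * y) \<le> norm y / (1 - norm h * norm y)" by simp
  moreover have "(x + h) * (s * y) = 1" "(s * y) * (x + h) = 1"
    unfolding factor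
    by (metis mult.assoc mult_1_right s(1) inv(1), metis mult.assoc mult_1_left s(2) inv(2))
  ultimately show ?thesis using that by blast
qed

lemma norm_left_inverse_near_invertible:
  fixes x :: "'a::{real_normed_algebra_1,banach}"
  assumes inv: "x * y = 1" "y * x = 1" and near: "norm (x' - x) * norm y \<le> 1/2"
    and left_inv: "z * x' = 1"
  shows "norm z \<le> 2 * norm y"
proof -
  have "norm (x' - x) * norm y < 1" using near by simp
  then obtain w where w: "x' * w = 1" "norm w \<le> norm y / (1 - norm (x' - x) * norm y)"
    using invertible_add_small[OF inv, of "x' - x"] by auto
  have "z = (z * x') * w" by (simp add: mult.assoc w(1))
  then have "z = w" by (simp add: left_inv)
  also have "norm w \<le> norm y / (1/2)"
    using near by (intro order.trans[OF w(2)] divide_left_mono) auto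
  finally show ?thesis by simp
qed

lemma open_invertible_elem: "open {x::'a::{real_normed_algebra_1,banach}. invertible_elem x}"
proof (unfold open_dist, intro ballI)
  fix x :: 'a assume "x \<in> {x. invertible_elem x}"
  then obtain y where inv: "x * y = 1" "y * x = 1" unfolding invertible_elem_def by blast
  have "norm (z - x) * norm y < 1" if "dist z x < 1 / (norm y + 1)" for z
  proof -
    have "norm (z - x) * norm y \<le> norm (z - x) * (norm y + 1)" by (simp add: mult_left_mono)
    also have "\<dots> < 1"
      using that pos_less_divide_eq[of "norm y + 1" "norm (z - x)" 1] norm_ge_zero[of y]
      by (simp add: dist_norm)
    finally show ?thesis .
  qed
  then have "invertible_elem z" if "dist z x < 1 / (norm y + 1)" for z
    using invertible_add_small[OF inv, of "z - x"] that unfolding invertible_elem_def by auto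
  moreover have "1 / (norm y + 1) > 0" by (simp add: add_nonneg_pos)
  ultimately show "\<exists>e>0. \<forall>z. dist z x < e \<longrightarrow> z \<in> {x. invertible_elem x}" by blast
qed

lemma continuous_Rq: "continuous (at q) (\<lambda>q. Rq q (v::'v::real_normed_algebra_1))"
  unfolding Rq_def qRe_def by (intro continuous_intros)

lemma closed_S_spectrum: "closed (S_spectrum (a::'v::{real_normed_algebra_1,banach}))"
proof -
  have "S_spectrum a = (\<lambda>q. Rq q a) -` {x. \<not> invertible_elem x}"
    unfolding S_spectrum_def by auto
  then show ?thesis
    using continuous_closed_vimage continuous_Rq closed_Collect_neg[OF open_invertible_elem]
    by metis
qed

lemma invertible_elem_hom:
  assumes "\<And>x y. A (x * y) = A x * A y" "A 1 = 1" "invertible_elem x"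
  shows "invertible_elem (A x)"
  using assms unfolding invertible_elem_def by metis

lemma quat_alg_hom_Rq:
  assumes "quat_two_sided_banach_algebra LV RV" "quat_two_sided_banach_algebra LW RW"
    and "quat_alg_hom LV RV LW RW A"
  shows "A (Rq q a) = Rq q (A a)"
proof -
  have add: "A (x + y) = A x + A y" and mult: "A (x * y) = A x * A y" and unit: "A 1 = 1" for x y
    using assms(3) unfolding quat_alg_hom_def by blast+
  have scaleR: "A (r *\<^sub>R x) = r *\<^sub>R A x" for r x
    \<comment> \<open>real scalars act as the quaternions \<open>qof_real r\<close>\<close>
    using assms unfolding quat_two_sided_banach_algebra_def quat_alg_hom_def by metis
  have diff: "A (x - y) = A x - A y" for x y
    using add[of "x - y" y] by simp
  show ?thesis unfolding Rq_def by (simp add: add diff mult scaleR unit)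
qed

lemma S_Phi_spectrum_subset_S_spectrum:
  fixes A :: "'v::real_normed_algebra_1 \<Rightarrow> 'w::ring_1"
  assumes "\<And>x y. A (x * y) = A x * A y" "A 1 = 1"
  shows "S_Phi_spectrum A a \<subseteq> S_spectrum a"
  using invertible_elem_hom[of A] assms
  unfolding S_Phi_spectrum_def S_spectrum_def Phi_set_def by auto

text \<open>Bounded below does not make A continuous, hence the separate hypothesis on \<open>A \<circ> f\<close>.\<close>

lemma invertible_elem_tendsto_bounded_below_hom:
  fixes A :: "'v::{real_normed_algebra_1,banach} \<Rightarrow> 'w::{real_normed_algebra_1,banach}"
  assumes mult: "\<And>x y. A (x * y) = A x * A y" and unit: "A 1 = 1" and "bounded_below A"
    and "F \<noteq> bot" and lim: "(f \<longlongrightarrow> x) F" and lim_A: "((\<lambda>i. A (f i)) \<longlongrightarrow> A x) F"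
    and "eventually (\<lambda>i. invertible_elem (f i)) F" and "invertible_elem (A x)"
  shows "invertible_elem x"
proof -
  obtain c where c: "c > 0" "\<And>v. c * norm v \<le> norm (A v)"
    using \<open>bounded_below A\<close> unfolding bounded_below_def by blast
  obtain Y where Y: "A x * Y = 1" "Y * A x = 1"
    using \<open>invertible_elem (A x)\<close> unfolding invertible_elem_def by blast
  define M where "M = 2 * norm Y / c"
  have "((\<lambda>i. norm (A (f i) - A x) * norm Y) \<longlongrightarrow> 0) F"
    using tendsto_mult_left_zero[OF tendsto_norm_zero[OF LIM_zero[OF lim_A]]] by simp
  then have "eventually (\<lambda>i. norm (A (f i) - A x) * norm Y < 1/2) F"
    by (rule order_tendstoD) simp
  moreover have "((\<lambda>i. norm (x - f i) * M) \<longlongrightarrow> 0) F"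
    using tendsto_mult_left_zero[OF tendsto_norm_zero[OF LIM_zero[OF lim]]]
    by (simp add: norm_minus_commute)
  then have "eventually (\<lambda>i. norm (x - f i) * M < 1) F"
    by (rule order_tendstoD) simp
  ultimately obtain i where near_A: "norm (A (f i) - A x) * norm Y < 1/2"
    and near: "norm (x - f i) * M < 1" and "invertible_elem (f i)"
    using eventually_happens'[OF \<open>F \<noteq> bot\<close>] \<open>eventually (\<lambda>i. invertible_elem (f i)) F\<close>
    by (metis (mono_tags, lifting) eventually_conj_iff)
  then obtain y where y: "f i * y = 1" "y * f i = 1" unfolding invertible_elem_def by blast
  have "A y * A (f i) = 1" using y(2) mult unit by metis
  then have "norm (A y) \<le> 2 * norm Y"
    using near_A by (intro norm_left_inverse_near_invertible[OF Y, of "A (f i)"]) auto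
  then have "norm y \<le> M" using c unfolding M_def by (smt (verit) pos_le_divide_eq mult.commute)
  then have "norm (x - f i) * norm y < 1"
    using near by (smt (verit) mult_left_mono norm_ge_zero)
  then show ?thesis
    using invertible_add_small[OF y] unfolding invertible_elem_def
    by (metis add.commute diff_add_cancel)
qed

lemma frontier_S_spectrum_subset_S_Phi_spectrum:
  assumes V: "quat_two_sided_banach_algebra LV RV" and W: "quat_two_sided_banach_algebra LW RW"
    and hom: "quat_alg_hom LV RV LW RW A" and "bounded_below A"
    and q: "q \<in> frontier (S_spectrum a)"
  shows "q \<in> S_Phi_spectrum A a"
proof (rule ccontr)
  let ?F = "at q within - S_spectrum a"
  assume "q \<notin> S_Phi_spectrum A a"
  then have "invertible_elem (A (Rq q a))"
    unfolding S_Phi_spectrum_def Phi_set_def by simp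
  have "q \<in> S_spectrum a"
    using q closed_S_spectrum frontier_subset_closed by blast
  moreover have "q islimpt - S_spectrum a"
    using q calculation by (auto simp: frontier_closures closure_def)
  then have "?F \<noteq> bot" by (simp add: trivial_limit_within)
  moreover have "eventually (\<lambda>p. invertible_elem (Rq p a)) ?F"
    by (simp add: eventually_at_filter S_spectrum_def)
  moreover have "((\<lambda>p. Rq p v) \<longlongrightarrow> Rq q v) ?F" for v :: "'v::{real_normed_algebra_1,banach}"
    using continuous_Rq[of q v] tendsto_mono[OF at_le[OF subset_UNIV]]
    by (simp add: continuous_at)
  moreover have "((\<lambda>p. A (Rq p a)) \<longlongrightarrow> A (Rq q a)) ?F"
    using continuous_Rq[of q "A a"] tendsto_mono[OF at_le[OF subset_UNIV]]
    by (simp add: continuous_at quat_alg_hom_Rq[OF V W hom])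
  ultimately have "invertible_elem (Rq q a)"
    using invertible_elem_tendsto_bounded_below_hom[of A] hom \<open>bounded_below A\<close>
      \<open>invertible_elem (A (Rq q a))\<close>
    unfolding quat_alg_hom_def by blast
  with \<open>q \<in> S_spectrum a\<close> show False unfolding S_spectrum_def by simp
qed

theorem mainTheorem4:
  fixes LV :: "quat \<Rightarrow> 'v::{real_normed_algebra_1,banach} \<Rightarrow> 'v"
    and RV :: "'v \<Rightarrow> quat \<Rightarrow> 'v"
    and LW :: "quat \<Rightarrow> 'w::{real_normed_algebra_1,banach} \<Rightarrow> 'w"
    and RW :: "'w \<Rightarrow> quat \<Rightarrow> 'w"
    and A :: "'v \<Rightarrow> 'w"
    and a :: 'v
  assumes "quat_two_sided_banach_algebra LV RV"
    and "quat_two_sided_banach_algebra LW RW"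
    and "quat_alg_hom LV RV LW RW A"
    and "bounded_below A"
  shows "frontier (S_spectrum a) \<subseteq> frontier (S_Phi_spectrum A a)"
proof
  fix q assume q: "q \<in> frontier (S_spectrum a)"
  have "q \<in> S_Phi_spectrum A a"
    using frontier_S_spectrum_subset_S_Phi_spectrum[OF assms q] .
  moreover have "S_Phi_spectrum A a \<subseteq> S_spectrum a"
    using assms(3) unfolding quat_alg_hom_def by (intro S_Phi_spectrum_subset_S_spectrum) auto
  then have "closure (- S_spectrum a) \<subseteq> closure (- S_Phi_spectrum A a)"
    by (intro closure_mono) blast
  ultimately show "q \<in> frontier (S_Phi_spectrum A a)"
    using q closure_subset by (auto simp: frontier_closures)
qed

end
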